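(* Let the six equivalence operations $\equiv_0,\dots,\equiv_5$ on an ortholattice be as defined in the context. Then: (i) In every orthomodular lattice, $a' = a\equiv_i 0$ for all elements $a$ and each $i=0,1,\dots,5$. (ii) Let $t(a,b)$ be any term built from the variables $a,b$ and the constants $0,1$ using only the operations $\equiv_0,\dots,\equiv_5$ and orthocomplementation $'$. Then $t(a,b)$ is not equal in the free orthomodular lattice on the two generators $a,b$ (equivalently, is not identically equal in all orthomodular lattices) to any classical or quantum join or meet (in particular, to none of the implications $a\to_i b$, $i=0,\dots,5$, nor to their complements).
   Context: An orthomodular lattice (OML) is an ortholattice $(L,\cap,\cup,{}',0,1)$ satisfying $a\le b \Rightarrow b = a\cup(a'\cap b)$. The equivalence operations are $a\equiv_0 b=(a'\cup b)\cap(a\cup b')$, $a\equiv_1 b=(a\cup b')\cap(a'\cup(a\cap b))$, $a\equiv_2 b=(a\cup b')\cap(b\cup(a'\cap b'))$, $a\equiv_3 b=(a'\cup b)\cap(a\cup(a'\cap b'))$, $a\equiv_4 b=(a'\cup b)\cap(b'\cup(a\cap b))$, $a\equiv_5 b=(a\cap b)\cup(a'\cap b')$. The implications are $a\to_0 b=a'\cup b$, $a\to_1 b=a'\cup(a\cap b)$, $a\to_2 b=b\cup(a'\cap b')$, $a\to_3 b=(a'\cap b)\cup(a'\cap b')\cup(a\cap(a'\cup b))$, $a\to_4 b=(a\cap b)\cup(a'\cap b)\cup((a'\cup b)\cap b')$, $a\to_5 b=(a\cap b)\cup(a'\cap b)\cup(a'\cap b')$. A (classical or quantum) join, resp. meet,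 in two variables is a two-variable orthomodular-lattice term which, when evaluated in Boolean algebras, reduces to one of the classical joins $a\cup b$, $a\cup b'$, $a'\cup b$, $a'\cup b'$, resp. one of the classical meets $a\cap b$, $a\cap b'$, $a'\cap b$, $a'\cap b'$. *)

theory Defs
  imports Main
begin

record 'a ortho =
  ol_carrier :: "'a set"
  ol_meet :: "'a \<Rightarrow> 'a \<Rightarrow> 'a"
  ol_join :: "'a \<Rightarrow> 'a \<Rightarrow> 'a"
  ol_compl :: "'a \<Rightarrow> 'a"
  ol_zero :: 'a
  ol_one :: 'a

definition ol_le :: "'a ortho \<Rightarrow> 'a \<Rightarrow> 'a \<Rightarrow> bool" where
  "ol_le L x y \<longleftrightarrow> ol_meet L x y = x"

definition ortholattice :: "'a ortho \<Rightarrow> bool" where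
  "ortholattice L \<longleftrightarrow>
     (let C = ol_carrier L; m = ol_meet L; j = ol_join L; c = ol_compl L in
      ol_zero L \<in> C \<and> ol_one L \<in> C \<and>
      (\<forall>x\<in>C. \<forall>y\<in>C. m x y \<in> C \<and> j x y \<in> C) \<and>
      (\<forall>x\<in>C. c x \<in> C) \<and>
      (\<forall>x\<in>C. \<forall>y\<in>C. m x y = m y x \<and> j x y = j y x) \<and>
      (\<forall>x\<in>C. \<forall>y\<in>C. \<forall>z\<in>C. m (m x y) z = m x (m y z) \<and> j (j x y) z = j x (j y z)) \<and>
      (\<forall>x\<in>C. \<forall>y\<in>C. m x (j x y) = x \<and> j x (m x y) = x) \<and>
      (\<forall>x\<in>C. ol_le L (ol_zero L) x \<and> ol_le L x (ol_one L)) \<and>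
      (\<forall>x\<in>C. c (c x) = x) \<and>
      (\<forall>x\<in>C. \<forall>y\<in>C. ol_le L x y \<longrightarrow> ol_le L (c y) (c x)) \<and>
      (\<forall>x\<in>C. m x (c x) = ol_zero L \<and> j x (c x) = ol_one L))"

definition orthomodular :: "'a ortho \<Rightarrow> bool" where
  "orthomodular L \<longleftrightarrow> ortholattice L \<and>
     (\<forall>x\<in>ol_carrier L. \<forall>y\<in>ol_carrier L. ol_le L x y \<longrightarrow>
        y = ol_join L x (ol_meet L (ol_compl L x) y))"

datatype eqv_idx = E0 | E1 | E2 | E3 | E4 | E5

fun ol_equiv :: "'a ortho \<Rightarrow> eqv_idx \<Rightarrow> 'a \<Rightarrow> 'a \<Rightarrow> 'a" where
  "ol_equiv L E0 a b = ol_meet L (ol_join L (ol_compl L a) b) (ol_join L a (ol_compl L b))"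
| "ol_equiv L E1 a b = ol_meet L (ol_join L a (ol_compl L b)) (ol_join L (ol_compl L a) (ol_meet L a b))"
| "ol_equiv L E2 a b = ol_meet L (ol_join L a (ol_compl L b)) (ol_join L b (ol_meet L (ol_compl L a) (ol_compl L b)))"
| "ol_equiv L E3 a b = ol_meet L (ol_join L (ol_compl L a) b) (ol_join L a (ol_meet L (ol_compl L a) (ol_compl L b)))"
| "ol_equiv L E4 a b = ol_meet L (ol_join L (ol_compl L a) b) (ol_join L (ol_compl L b) (ol_meet L a b))"
| "ol_equiv L E5 a b = ol_join L (ol_meet L a b) (ol_meet L (ol_compl L a) (ol_compl L b))"

datatype olterm = TA | TB | TZero | TOne | TCompl olterm | TMeet olterm olterm | TJoin olterm olterm

fun ol_eval :: "'a ortho \<Rightarrow> olterm \<Rightarrow> 'a \<Rightarrow> 'a \<Rightarrow> 'a" where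
  "ol_eval L TA a b = a"
| "ol_eval L TB a b = b"
| "ol_eval L TZero a b = ol_zero L"
| "ol_eval L TOne a b = ol_one L"
| "ol_eval L (TCompl t) a b = ol_compl L (ol_eval L t a b)"
| "ol_eval L (TMeet t s) a b = ol_meet L (ol_eval L t a b) (ol_eval L s a b)"
| "ol_eval L (TJoin t s) a b = ol_join L (ol_eval L t a b) (ol_eval L s a b)"

datatype eqterm = QA | QB | QZero | QOne | QCompl eqterm | QEqv eqv_idx eqterm eqterm

fun eq_eval :: "'a ortho \<Rightarrow> eqterm \<Rightarrow> 'a \<Rightarrow> 'a \<Rightarrow> 'a" where
  "eq_eval L QA a b = a"
| "eq_eval L QB a b = b"
| "eq_eval L QZero a b = ol_zero L"
| "eq_eval L QOne a b = ol_one L"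
| "eq_eval L (QCompl t) a b = ol_compl L (eq_eval L t a b)"
| "eq_eval L (QEqv i t s) a b = ol_equiv L i (eq_eval L t a b) (eq_eval L s a b)"

text \<open>Evaluation in the two-element Boolean algebra (which generates the variety
  of Boolean algebras, so identities there are exactly the Boolean identities).\<close>
fun bool_eval :: "olterm \<Rightarrow> bool \<Rightarrow> bool \<Rightarrow> bool" where
  "bool_eval TA a b = a"
| "bool_eval TB a b = b"
| "bool_eval TZero a b = False"
| "bool_eval TOne a b = True"
| "bool_eval (TCompl t) a b = (\<not> bool_eval t a b)"
| "bool_eval (TMeet t s) a b = (bool_eval t a b \<and> bool_eval s a b)"
| "bool_eval (TJoin t s) a b = (bool_eval t a b \<or> bool_eval s a b)"

definition classical_or_quantum_join :: "olterm \<Rightarrow> bool" where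
  "classical_or_quantum_join s \<longleftrightarrow> bool_eval s \<in>
     {\<lambda>a b. a \<or> b, \<lambda>a b. a \<or> \<not> b, \<lambda>a b. \<not> a \<or> b, \<lambda>a b. \<not> a \<or> \<not> b}"

definition classical_or_quantum_meet :: "olterm \<Rightarrow> bool" where
  "classical_or_quantum_meet s \<longleftrightarrow> bool_eval s \<in>
     {\<lambda>a b. a \<and> b, \<lambda>a b. a \<and> \<not> b, \<lambda>a b. \<not> a \<and> b, \<lambda>a b. \<not> a \<and> \<not> b}"

text \<open>OMLs are taken with carrier in nat (the free OML on two generators is finite, so this loses nothing).\<close>
definition oml_identity :: "eqterm \<Rightarrow> olterm \<Rightarrow> bool" where
  "oml_identity t s \<longleftrightarrow>
     (\<forall>L :: nat ortho. orthomodular L \<longrightarrow>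
        (\<forall>a\<in>ol_carrier L. \<forall>b\<in>ol_carrier L. eq_eval L t a b = ol_eval L s a b))"

end

theory Submission
  imports Defs
begin

text \<open>Part (i) already holds in every ortholattice: with \<open>b = 0\<close> each \<open>\<equiv>\<^sub>i\<close> collapses to
  \<open>a'\<close> by the unit and complement laws alone. For part (ii), evaluate in the two-element
  Boolean algebra, which is an OML. There all six equivalences become the biconditional, so every
  equivalence term is an XOR-affine Boolean function, and its Zhegalkin polynomial has no
  \<open>ab\<close> monomial; every classical join or meet has one.\<close>

lemma ortholattice_unit_laws:
  assumes "ortholattice L" "x \<in> ol_carrier L"
  shows "ol_meet L x (ol_zero L) = ol_zero L" "ol_join L x (ol_zero L) = x"
    "ol_meet L x (ol_one L) = x" "ol_join L x (ol_one L) = ol_one L"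
    "ol_meet L (ol_zero L) x = ol_zero L" "ol_join L (ol_zero L) x = x"
    "ol_meet L (ol_one L) x = x" "ol_join L (ol_one L) x = ol_one L"
proof -
  let ?C = "ol_carrier L" and ?m = "ol_meet L" and ?j = "ol_join L"
    and ?z = "ol_zero L" and ?o = "ol_one L"
  have z: "?z \<in> ?C" and o: "?o \<in> ?C"
    and mc: "\<And>x y. x \<in> ?C \<Longrightarrow> y \<in> ?C \<Longrightarrow> ?m x y = ?m y x"
    and jc: "\<And>x y. x \<in> ?C \<Longrightarrow> y \<in> ?C \<Longrightarrow> ?j x y = ?j y x"
    and absorb: "\<And>x y. x \<in> ?C \<Longrightarrow> y \<in> ?C \<Longrightarrow> ?j x (?m x y) = x"
    and le_zero: "\<And>x. x \<in> ?C \<Longrightarrow> ?m ?z x = ?z"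
    and le_one: "\<And>x. x \<in> ?C \<Longrightarrow> ?m x ?o = x"
    using assms(1) unfolding ortholattice_def Let_def ol_le_def by auto
  show "?m x ?z = ?z" "?j x ?z = x" "?m x ?o = x" "?j x ?o = ?o"
    "?m ?z x = ?z" "?j ?z x = x" "?m ?o x = x" "?j ?o x = ?o"
    using absorb jc le_zero le_one mc z o assms(2) by metis+
qed

lemma ortholattice_compl_zero:
  assumes "ortholattice L"
  shows "ol_compl L (ol_zero L) = ol_one L"
proof -
  have "ol_zero L \<in> ol_carrier L" "ol_compl L (ol_zero L) \<in> ol_carrier L"
    and "ol_join L (ol_zero L) (ol_compl L (ol_zero L)) = ol_one L"
    using assms unfolding ortholattice_def Let_def by auto
  then show ?thesis using ortholattice_unit_laws(6)[OF assms] by metis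
qed

lemma ortholattice_equiv_zero:
  assumes "ortholattice L" "a \<in> ol_carrier L"
  shows "ol_equiv L i a (ol_zero L) = ol_compl L a"
proof -
  have "ol_compl L a \<in> ol_carrier L" "ol_zero L \<in> ol_carrier L"
    and "ol_meet L a (ol_compl L a) = ol_zero L" "ol_join L a (ol_compl L a) = ol_one L"
    using assms unfolding ortholattice_def Let_def by auto
  then show ?thesis
    using assms ortholattice_unit_laws[OF assms(1)] ortholattice_compl_zero[OF assms(1)]
    by (cases i) simp_all
qed

definition bool_ortho :: "nat ortho" where
  "bool_ortho = \<lparr>ol_carrier = {0, 1}, ol_meet = min, ol_join = max, ol_compl = (\<lambda>x. 1 - x),
                 ol_zero = 0, ol_one = 1\<rparr>"

lemma orthomodular_bool_ortho: "orthomodular bool_ortho"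
  unfolding orthomodular_def ortholattice_def bool_ortho_def ol_le_def Let_def
  by (simp add: Ball_def)

lemma bool_ortho_of_bool:
  "ol_meet bool_ortho (of_bool p) (of_bool q) = of_bool (p \<and> q)"
  "ol_join bool_ortho (of_bool p) (of_bool q) = of_bool (p \<or> q)"
  "ol_compl bool_ortho (of_bool p) = of_bool (\<not> p)"
  "ol_zero bool_ortho = of_bool False"
  "ol_one bool_ortho = of_bool True"
  by (simp_all add: bool_ortho_def)

lemma bool_ortho_equiv: "ol_equiv bool_ortho i (of_bool p) (of_bool q) = of_bool (p = q)"
  by (cases i; cases p; cases q) (simp_all add: bool_ortho_def)

fun eq_bool_eval :: "eqterm \<Rightarrow> bool \<Rightarrow> bool \<Rightarrow> bool" where
  "eq_bool_eval QA a b = a"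
| "eq_bool_eval QB a b = b"
| "eq_bool_eval QZero a b = False"
| "eq_bool_eval QOne a b = True"
| "eq_bool_eval (QCompl t) a b = (\<not> eq_bool_eval t a b)"
| "eq_bool_eval (QEqv i t s) a b = (eq_bool_eval t a b = eq_bool_eval s a b)"

lemma eq_eval_bool_ortho:
  "eq_eval bool_ortho t (of_bool a) (of_bool b) = of_bool (eq_bool_eval t a b)"
  by (induction t) (simp_all add: bool_ortho_of_bool bool_ortho_equiv)

lemma ol_eval_bool_ortho:
  "ol_eval bool_ortho s (of_bool a) (of_bool b) = of_bool (bool_eval s a b)"
  by (induction s) (simp_all add: bool_ortho_of_bool)

lemma oml_identity_imp_bool_eval_eq:
  assumes "oml_identity t s"
  shows "eq_bool_eval t = bool_eval s"
proof (intro ext)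
  fix a b :: bool
  have "of_bool a \<in> ol_carrier bool_ortho" "of_bool b \<in> ol_carrier bool_ortho"
    by (simp_all add: bool_ortho_def)
  then have "of_bool (eq_bool_eval t a b) = (of_bool (bool_eval s a b) :: nat)"
    using assms orthomodular_bool_ortho
    unfolding oml_identity_def eq_eval_bool_ortho [symmetric] ol_eval_bool_ortho [symmetric]
    by blast
  then show "eq_bool_eval t a b = bool_eval s a b" by (simp only: of_bool_eq_iff)
qed

text \<open>The coefficient of \<open>ab\<close> in the Zhegalkin polynomial (algebraic normal form over GF(2))
  of a binary Boolean function.\<close>

definition mixed_coeff :: "(bool \<Rightarrow> bool \<Rightarrow> bool) \<Rightarrow> bool" where
  "mixed_coeff f \<longleftrightarrow> (f True True \<noteq> f True False) \<noteq> (f False True \<noteq> f False False)"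

lemma not_mixed_coeff_eq_bool_eval: "\<not> mixed_coeff (eq_bool_eval t)"
  by (induction t) (auto simp: mixed_coeff_def)

lemma mixed_coeff_join_or_meet:
  assumes "classical_or_quantum_join s \<or> classical_or_quantum_meet s"
  shows "mixed_coeff (bool_eval s)"
  using assms unfolding classical_or_quantum_join_def classical_or_quantum_meet_def
  by (auto simp: mixed_coeff_def)

theorem theorem3:
  shows "(\<forall>(L :: 'a ortho). orthomodular L \<longrightarrow>
            (\<forall>a\<in>ol_carrier L. \<forall>i. ol_compl L a = ol_equiv L i a (ol_zero L)))
       \<and> (\<forall>(t :: eqterm) (s :: olterm).
            (classical_or_quantum_join s \<or> classical_or_quantum_meet s) \<longrightarrow>
            \<not> oml_identity t s)"
proof (intro conjI allI impI ballI notI)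
  fix L :: "'a ortho" and a i
  assume "orthomodular L" "a \<in> ol_carrier L"
  then show "ol_compl L a = ol_equiv L i a (ol_zero L)"
    unfolding orthomodular_def using ortholattice_equiv_zero by metis
next
  fix t s
  assume "classical_or_quantum_join s \<or> classical_or_quantum_meet s" "oml_identity t s"
  then show False
    using mixed_coeff_join_or_meet not_mixed_coeff_eq_bool_eval oml_identity_imp_bool_eval_eq
    by metis
qed

end
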